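(* Under the standing assumptions: (i) $v(P)\ge v(D^F)$ if and only if $\Omega\cap B\subseteq\operatorname{epi}(f-g+\delta_A)^c\cap B$. (ii) $v(P)\ge v(\bar D^F)$ if and only if $K\cap B\subseteq\operatorname{epi}(f-g+\delta_A)^c\cap B$.
   Context: Let $X$ be a nontrivial separated locally convex space with topological dual $X^*$, endowed with the topology $\sigma(X,X^* )$; $\langle x,x^*\rangle$ is the value of $x^*\in X^*$ at $x\in X$. Put $W:=X^*\times X^*\times\mathbb{R}$, $\mathbb{R}_{++}:=]0,+\infty[$ and $Z:=X^*\times X^*\times\mathbb{R}_{++}$. For $y^*\in X^*$, $\alpha\in\mathbb{R}$, let $H^-_{y^*,\alpha}:=\{x\in X:\langle x,y^*\rangle<\alpha\}$. The coupling function $c:X\times W\to\overline{\mathbb{R}}$ is $c(x,(x^*,y^*,\alpha)):=\langle x,x^*\rangle$ if $\langle x,y^*\rangle<\alpha$ and $:=+\infty$ otherwise. For $h:X\to\overline{\mathbb{R}}$ its $c$-conjugate is $h^c:W\to\overline{\mathbb{R}}$, $h^c(w):=\sup_{x\in X}\{c(x,w)-h(x)\}$, with the convention $(+\infty)+(-\infty)=(-\infty)+(+\infty)=(+\infty)-(+\infty)=(-\infty)-(-\infty)=-\infty$ (so for proper $h$, $h^c(x^*,y^*,\alpha)=h^*(x^* )$ if $\operatorname{dom}h\subseteq H^-_{y^*,\alpha}$ and $+\infty$ otherwise). Epigraphs of functions on $W$ are subsets of $W\times\mathbb{R}$. $\delta_A$ is the indicator function of $A$. For $E\subseteq W\times\mathbb{R}$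 and $e\in W\times\mathbb{R}$, $E-e:=\{z-e:z\in E\}$. Standing assumptions: $f,g:X\to\overline{\mathbb{R}}$ proper convex with $\operatorname{dom}f\subseteq\operatorname{dom}g$, $A\subseteq X$ nonempty, convention $(+\infty)-(+\infty)=+\infty$ in $f-g$; $v(P)=\inf_{x\in X}\{f(x)-g(x)+\delta_A(x)\}$. With $\varphi(u^*,v^*,\gamma;x^*,y^*,\alpha):=g^c(u^*,v^*,\gamma)-f^c(u^*-x^*,-y^*,\alpha)-\delta_A^c(x^*,y^*,\alpha)$: $v(D^F):=\sup_{(x^*,y^*,\alpha)\in Z}\inf_{(u^*,v^*,\gamma)\in\operatorname{dom}g^c}\varphi$ and $v(\bar D^F):=\inf_{(u^*,v^*,\gamma)\in\operatorname{dom}g^c}\sup_{(x^*,y^*,\alpha)\in Z}\varphi$. Sets: $B:=\{0\}\times\{0\}\times\mathbb{R}_{++}\times\mathbb{R}\subseteq W\times\mathbb{R}$; $\Omega:=\bigcup_{(x^*,y^*,\alpha)\in\operatorname{dom}\delta_A^c}\ \bigcap_{(u^*,v^*,\gamma)\in\operatorname{dom}g^c}\Big[\operatorname{epi}\big(f-c(\cdot,(-x^*,-y^*,\alpha))\big)^c-\big(u^*,0,0,g^c(u^*,v^*,\gamma)-\delta_A^c(x^*,y^*,\alpha)\big)\Big]$, $K:=\bigcap_{(u^*,v^*,\gamma)\in\operatorname{dom}g^c}\ \bigcup_{(x^*,y^*,\alpha)\in\operatorname{dom}\delta_A^c}\Big[\operatorname{epi}\big(f-c(\cdot,(-x^*,-y^*,\alpha))\big)^c-\big(u^*,0,0,g^c(u^*,v^*,\gamma)-\delta_A^c(x^*,y^*,\alpha)\big)\Big]$.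 *)

theory Defs
  imports "HOL-Analysis.Analysis" "HOL-Library.Extended_Real"
begin

definition lcs_topology :: "'a::real_vector topology \<Rightarrow> bool" where
  "lcs_topology T \<longleftrightarrow>
     topspace T = UNIV \<and>
     continuous_map (prod_topology T T) T (\<lambda>(x, y). x + y) \<and>
     continuous_map (prod_topology euclideanreal T) T (\<lambda>(c, x). c *\<^sub>R x) \<and>
     (\<forall>U. openin T U \<and> 0 \<in> U \<longrightarrow> (\<exists>V. openin T V \<and> convex V \<and> 0 \<in> V \<and> V \<subseteq> U)) \<and>
     Hausdorff_space T"

definition top_dual :: "'a::real_vector topology \<Rightarrow> ('a \<Rightarrow> real) set" where
  "top_dual T = {l. linear l \<and> continuous_map T euclideanreal l}"

text \<open>Subtraction with the convention (+inf)-(+inf) = (-inf)-(-inf) = -inf (used in c-conjugates).\<close>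
definition sub_lo :: "ereal \<Rightarrow> ereal \<Rightarrow> ereal" where
  "sub_lo a b = (if (a = \<infinity> \<and> b = \<infinity>) \<or> (a = -\<infinity> \<and> b = -\<infinity>) then -\<infinity> else a - b)"

text \<open>Subtraction with the convention (+inf)-(+inf) = +inf (used in f - g).\<close>
definition sub_up :: "ereal \<Rightarrow> ereal \<Rightarrow> ereal" where
  "sub_up a b = (if a = \<infinity> then \<infinity> else if a = -\<infinity> \<and> b = -\<infinity> then -\<infinity> else a - b)"

definition proper_fun :: "('a \<Rightarrow> ereal) \<Rightarrow> bool" where
  "proper_fun h \<longleftrightarrow> (\<forall>x. h x \<noteq> -\<infinity>) \<and> (\<exists>x. h x \<noteq> \<infinity>)"

definition convex_fun :: "('a::real_vector \<Rightarrow> ereal) \<Rightarrow> bool" where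
  "convex_fun h \<longleftrightarrow> convex {(x, r::real). h x \<le> ereal r}"

definition efdom :: "('a \<Rightarrow> ereal) \<Rightarrow> 'a set" where
  "efdom h = {x. h x < \<infinity>}"

definition indic :: "'a set \<Rightarrow> 'a \<Rightarrow> ereal" where
  "indic A x = (if x \<in> A then 0 else \<infinity>)"

type_synonym 'a dualtrip = "('a \<Rightarrow> real) \<times> ('a \<Rightarrow> real) \<times> real"

text \<open>W = X* x X* x R, inside the ambient type of triples.\<close>
definition Wset :: "('a \<Rightarrow> real) set \<Rightarrow> 'a dualtrip set" where
  "Wset Xs = Xs \<times> Xs \<times> UNIV"

definition Zset :: "('a \<Rightarrow> real) set \<Rightarrow> 'a dualtrip set" where
  "Zset Xs = Xs \<times> Xs \<times> {0<..}"

definition coup :: "'a \<Rightarrow> 'a dualtrip \<Rightarrow> ereal" where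
  "coup x w = (case w of (xs, ys, \<alpha>) \<Rightarrow> if ys x < \<alpha> then ereal (xs x) else \<infinity>)"

definition cconj :: "('a \<Rightarrow> ereal) \<Rightarrow> 'a dualtrip \<Rightarrow> ereal" where
  "cconj h w = (SUP x. sub_lo (coup x w) (h x))"

definition Wdom :: "('a \<Rightarrow> real) set \<Rightarrow> ('a dualtrip \<Rightarrow> ereal) \<Rightarrow> 'a dualtrip set" where
  "Wdom Xs k = {w \<in> Wset Xs. k w < \<infinity>}"

definition Wepi :: "('a \<Rightarrow> real) set \<Rightarrow> ('a dualtrip \<Rightarrow> ereal) \<Rightarrow> ('a dualtrip \<times> real) set" where
  "Wepi Xs k = {(w, r). w \<in> Wset Xs \<and> k w \<le> ereal r}"

definition shift_set :: "('a dualtrip \<times> real) set \<Rightarrow> ('a dualtrip \<times> real) \<Rightarrow> ('a dualtrip \<times> real) set" where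
  "shift_set E e = (\<lambda>((a, b, c), r). ((\<lambda>x. a x - fst (fst e) x, \<lambda>x. b x - fst (snd (fst e)) x, c - snd (snd (fst e))), r - snd e)) ` E"

definition Bset :: "('a dualtrip \<times> real) set" where
  "Bset = {(((\<lambda>_. 0), (\<lambda>_. 0), a), r) | a r. a > 0}"

definition fmg :: "('a \<Rightarrow> ereal) \<Rightarrow> ('a \<Rightarrow> ereal) \<Rightarrow> 'a set \<Rightarrow> 'a \<Rightarrow> ereal" where
  "fmg f g A x = sub_up (f x) (g x) + indic A x"

definition vP :: "('a \<Rightarrow> ereal) \<Rightarrow> ('a \<Rightarrow> ereal) \<Rightarrow> 'a set \<Rightarrow> ereal" where
  "vP f g A = (INF x. fmg f g A x)"

definition phiF :: "('a \<Rightarrow> ereal) \<Rightarrow> ('a \<Rightarrow> ereal) \<Rightarrow> 'a set \<Rightarrow> 'a dualtrip \<Rightarrow> 'a dualtrip \<Rightarrow> ereal" where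
  "phiF f g A u z = (case u of (us, vs, \<gamma>) \<Rightarrow> case z of (xs, ys, \<alpha>) \<Rightarrow>
      sub_lo (sub_lo (cconj g (us, vs, \<gamma>)) (cconj f (\<lambda>x. us x - xs x, \<lambda>x. - ys x, \<alpha>))) (cconj (indic A) (xs, ys, \<alpha>)))"

definition vDF :: "('a \<Rightarrow> real) set \<Rightarrow> ('a \<Rightarrow> ereal) \<Rightarrow> ('a \<Rightarrow> ereal) \<Rightarrow> 'a set \<Rightarrow> ereal" where
  "vDF Xs f g A = (SUP z\<in>Zset Xs. INF u\<in>Wdom Xs (cconj g). phiF f g A u z)"

definition vDFbar :: "('a \<Rightarrow> real) set \<Rightarrow> ('a \<Rightarrow> ereal) \<Rightarrow> ('a \<Rightarrow> ereal) \<Rightarrow> 'a set \<Rightarrow> ereal" where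
  "vDFbar Xs f g A = (INF u\<in>Wdom Xs (cconj g). SUP z\<in>Zset Xs. phiF f g A u z)"

definition fminc :: "('a \<Rightarrow> ereal) \<Rightarrow> 'a dualtrip \<Rightarrow> 'a \<Rightarrow> ereal" where
  "fminc f z x = (case z of (xs, ys, \<alpha>) \<Rightarrow> sub_up (f x) (coup x (\<lambda>y. - xs y, \<lambda>y. - ys y, \<alpha>)))"

text \<open>The set epi (f - c(., (-x*,-y*,alpha)))^c - (u*, 0, 0, g^c(u*,v*,gamma) - delta_A^c(x*,y*,alpha)).\<close>
definition piece :: "('a \<Rightarrow> real) set \<Rightarrow> ('a \<Rightarrow> ereal) \<Rightarrow> ('a \<Rightarrow> ereal) \<Rightarrow> 'a set
    \<Rightarrow> 'a dualtrip \<Rightarrow> 'a dualtrip \<Rightarrow> ('a dualtrip \<times> real) set" where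
  "piece Xs f g A u z = (case u of (us, vs, \<gamma>) \<Rightarrow>
      shift_set (Wepi Xs (cconj (fminc f z)))
        ((us, (\<lambda>_. 0), 0), real_of_ereal (sub_lo (cconj g (us, vs, \<gamma>)) (cconj (indic A) z))))"

definition Omega :: "('a \<Rightarrow> real) set \<Rightarrow> ('a \<Rightarrow> ereal) \<Rightarrow> ('a \<Rightarrow> ereal) \<Rightarrow> 'a set \<Rightarrow> ('a dualtrip \<times> real) set" where
  "Omega Xs f g A = (\<Union>z\<in>Wdom Xs (cconj (indic A)). \<Inter>u\<in>Wdom Xs (cconj g). piece Xs f g A u z)"

definition Kset :: "('a \<Rightarrow> real) set \<Rightarrow> ('a \<Rightarrow> ereal) \<Rightarrow> ('a \<Rightarrow> ereal) \<Rightarrow> 'a set \<Rightarrow> ('a dualtrip \<times> real) set" where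
  "Kset Xs f g A = (\<Inter>u\<in>Wdom Xs (cconj g). \<Union>z\<in>Wdom Xs (cconj (indic A)). piece Xs f g A u z)"

end

theory Submission
  imports Defs
begin

text \<open>A point ((0, 0, \<alpha>), r) of B with \<alpha> > 0 lies in the shifted epigraph indexed by (u, z)
  exactly when -r \<le> \<phi>(u; z), and in the epigraph of (f - g + \<delta>A)^c exactly when -r \<le> v(P).
  Hence the inclusion for Omega says that every real s with s \<le> \<phi>(u; z) for some z and all u is
  at most v(P), i.e. sup-inf \<phi> \<le> v(P), and the inclusion for K says inf-sup \<phi> \<le> v(P).
  In both dual values z may range over dom \<delta>A^c instead of Z: outside this domain \<phi> = -\<infinity>, and
  inside it raising \<alpha> to max \<alpha> 1 keeps \<delta>A^c and does not decrease \<phi>.\<close>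

lemma zero_in_top_dual: "(\<lambda>_. 0) \<in> top_dual T"
  unfolding top_dual_def by (auto simp: linear_zero)

lemma sub_lo_infinity_right: "sub_lo a \<infinity> = -\<infinity>"
  unfolding sub_lo_def by (cases a) auto

lemma sub_lo_mono_left: "a \<le> a' \<Longrightarrow> sub_lo a b \<le> sub_lo a' b"
  unfolding sub_lo_def by (cases a; cases a'; cases b) auto

lemma sub_lo_antimono_right: "b' \<le> b \<Longrightarrow> sub_lo a b \<le> sub_lo a b'"
  unfolding sub_lo_def by (cases a; cases b; cases b') auto

lemma ereal_le_iff_real_witnesses:
  fixes x y :: ereal
  assumes "\<And>s. P s \<Longrightarrow> ereal s \<le> y" and "\<And>s. ereal s < y \<Longrightarrow> P s"
  shows "y \<le> x \<longleftrightarrow> (\<forall>s. P s \<longrightarrow> ereal s \<le> x)"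
proof
  assume le: "\<forall>s. P s \<longrightarrow> ereal s \<le> x"
  show "y \<le> x"
  proof (rule ccontr)
    assume "\<not> y \<le> x"
    then have "x < y" by simp
    then obtain s where "x < ereal s" "ereal s < y" using ereal_dense2 by blast
    with assms(2) le show False by force
  qed
next
  assume "y \<le> x"
  then show "\<forall>s. P s \<longrightarrow> ereal s \<le> x" using assms(1) order_trans by blast
qed

lemma SUP_INF_le_iff:
  fixes \<phi> :: "'u \<Rightarrow> 'z \<Rightarrow> ereal"
  shows "(SUP z\<in>D. INF u\<in>U. \<phi> u z) \<le> x \<longleftrightarrow> (\<forall>s. (\<exists>z\<in>D. \<forall>u\<in>U. ereal s \<le> \<phi> u z) \<longrightarrow> ereal s \<le> x)"
proof (rule ereal_le_iff_real_witnesses)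
  show "ereal s \<le> (SUP z\<in>D. INF u\<in>U. \<phi> u z)" if "\<exists>z\<in>D. \<forall>u\<in>U. ereal s \<le> \<phi> u z" for s
    using that by (meson INF_greatest SUP_upper2)
  show "\<exists>z\<in>D. \<forall>u\<in>U. ereal s \<le> \<phi> u z" if "ereal s < (SUP z\<in>D. INF u\<in>U. \<phi> u z)" for s
    using that unfolding less_SUP_iff by (meson INF_lower less_imp_le order_trans)
qed

lemma INF_SUP_le_iff:
  fixes \<phi> :: "'u \<Rightarrow> 'z \<Rightarrow> ereal"
  shows "(INF u\<in>U. SUP z\<in>D. \<phi> u z) \<le> x \<longleftrightarrow> (\<forall>s. (\<forall>u\<in>U. \<exists>z\<in>D. ereal s \<le> \<phi> u z) \<longrightarrow> ereal s \<le> x)"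
proof (rule ereal_le_iff_real_witnesses)
  show "ereal s \<le> (INF u\<in>U. SUP z\<in>D. \<phi> u z)" if "\<forall>u\<in>U. \<exists>z\<in>D. ereal s \<le> \<phi> u z" for s
    using that by (meson INF_greatest SUP_upper2)
  show "\<forall>u\<in>U. \<exists>z\<in>D. ereal s \<le> \<phi> u z" if "ereal s < (INF u\<in>U. SUP z\<in>D. \<phi> u z)" for s
    using that by (meson less_INF_D less_SUP_iff less_imp_le)
qed

lemma cconj_gt_minf_of_proper:
  assumes "proper_fun h"
  shows "cconj h w > -\<infinity>"
proof -
  obtain x where x: "h x \<noteq> \<infinity>" "h x \<noteq> -\<infinity>" using assms unfolding proper_fun_def by auto
  have "-\<infinity> < sub_lo (coup x w) (h x)"
    using x unfolding sub_lo_def coup_def by (cases "h x") (auto split: prod.splits)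
  also have "\<dots> \<le> cconj h w" unfolding cconj_def by (rule SUP_upper) simp
  finally show ?thesis .
qed

lemma cconj_indic_gt_minf:
  assumes "A \<noteq> {}"
  shows "cconj (indic A) w > -\<infinity>"
proof -
  obtain x where "x \<in> A" using assms by auto
  then have "-\<infinity> < sub_lo (coup x w) (indic A x)"
    unfolding sub_lo_def coup_def indic_def by (auto split: prod.splits)
  also have "\<dots> \<le> cconj (indic A) w" unfolding cconj_def by (rule SUP_upper) simp
  finally show ?thesis .
qed

lemma cconj_indic_zero_le: "cconj (indic A) ((\<lambda>_. 0), (\<lambda>_. 0), 1) \<le> 0"
  unfolding cconj_def
  by (rule SUP_least) (auto simp: coup_def sub_lo_def indic_def zero_ereal_def)

lemma cconj_antimono_level:
  assumes "\<beta> \<le> \<beta>'"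
  shows "cconj h (a, b, \<beta>') \<le> cconj h (a, b, \<beta>)"
  unfolding cconj_def
proof (rule SUP_mono')
  show "sub_lo (coup x (a, b, \<beta>')) (h x) \<le> sub_lo (coup x (a, b, \<beta>)) (h x)" for x
    using assms unfolding coup_def sub_lo_def by (cases "h x") auto
qed

text \<open>A finite value of the conjugate indicator at (a, b, \<beta>) forces b < \<beta> on A,
  so every larger level gives the same value.\<close>
lemma cconj_indic_level_eq:
  assumes fin: "cconj (indic A) (a, b, \<beta>) < \<infinity>" and "\<beta> \<le> \<beta>'"
  shows "cconj (indic A) (a, b, \<beta>') = cconj (indic A) (a, b, \<beta>)"
  unfolding cconj_def
proof (rule SUP_cong[OF refl])
  fix x
  have "b x < \<beta>" if "x \<in> A"
  proof (rule ccontr)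
    assume "\<not> b x < \<beta>"
    with \<open>x \<in> A\<close> have "sub_lo (coup x (a, b, \<beta>)) (indic A x) = \<infinity>"
      unfolding coup_def sub_lo_def indic_def by auto
    moreover have "sub_lo (coup x (a, b, \<beta>)) (indic A x) \<le> cconj (indic A) (a, b, \<beta>)"
      unfolding cconj_def by (rule SUP_upper) simp
    ultimately show False using fin by simp
  qed
  then show "sub_lo (coup x (a, b, \<beta>')) (indic A x) = sub_lo (coup x (a, b, \<beta>)) (indic A x)"
    using assms(2) unfolding coup_def sub_lo_def indic_def by auto
qed

lemma cconj_fminc:
  assumes "\<forall>x. f x \<noteq> -\<infinity>" and "\<alpha> > 0"
  shows "cconj (fminc f (xs, ys, \<beta>)) (us, \<lambda>_. 0, \<alpha>) = cconj f (\<lambda>x. us x - xs x, \<lambda>x. - ys x, \<beta>)"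
  unfolding cconj_def
proof (rule SUP_cong[OF refl])
  fix x
  show "sub_lo (coup x (us, \<lambda>_. 0, \<alpha>)) (fminc f (xs, ys, \<beta>) x) =
        sub_lo (coup x (\<lambda>x. us x - xs x, \<lambda>x. - ys x, \<beta>)) (f x)"
    using assms(1)[rule_format, of x] assms(2)
    unfolding fminc_def coup_def sub_lo_def sub_up_def by (cases "f x") auto
qed

lemma cconj_fmg_zero:
  assumes "\<alpha> > 0"
  shows "cconj (fmg f g A) (\<lambda>_. 0, \<lambda>_. 0, \<alpha>) = - vP f g A"
proof -
  have "cconj (fmg f g A) (\<lambda>_. 0, \<lambda>_. 0, \<alpha>) = (SUP x. - fmg f g A x)"
    unfolding cconj_def
    by (rule SUP_cong[OF refl]) (use assms in \<open>auto simp: coup_def sub_lo_def zero_ereal_def[symmetric]\<close>)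
  also have "\<dots> = - vP f g A" unfolding vP_def by (rule ereal_SUP_uminus_eq)
  finally show ?thesis .
qed

lemma phiF_eq_minf_outside_dom:
  assumes "z \<in> Wset Xs" and "z \<notin> Wdom Xs (cconj (indic A))"
  shows "phiF f g A u z = -\<infinity>"
proof -
  from assms have "cconj (indic A) z = \<infinity>" unfolding Wdom_def by (simp add: less_top)
  then show ?thesis unfolding phiF_def by (cases u; cases z) (simp add: sub_lo_infinity_right)
qed

lemma phiF_le_phiF_level_max:
  assumes "cconj (indic A) (xs, ys, \<beta>) < \<infinity>"
  shows "phiF f g A u (xs, ys, \<beta>) \<le> phiF f g A u (xs, ys, max \<beta> 1)"
proof -
  obtain us vs \<gamma> where u: "u = (us, vs, \<gamma>)" by (cases u)
  have "cconj (indic A) (xs, ys, max \<beta> 1) = cconj (indic A) (xs, ys, \<beta>)"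
    by (rule cconj_indic_level_eq[OF assms]) simp
  moreover have "cconj f (\<lambda>x. us x - xs x, \<lambda>x. - ys x, max \<beta> 1)
      \<le> cconj f (\<lambda>x. us x - xs x, \<lambda>x. - ys x, \<beta>)"
    by (rule cconj_antimono_level) simp
  ultimately show ?thesis
    unfolding phiF_def u by (simp only: prod.case) (intro sub_lo_mono_left sub_lo_antimono_right)
qed

lemma dom_indic_dominated_by_Zset:
  assumes "z \<in> Wdom Xs (cconj (indic A))"
  shows "\<exists>z'\<in>Zset Xs. \<forall>u. phiF f g A u z \<le> phiF f g A u z'"
proof -
  obtain xs ys \<beta> where z: "z = (xs, ys, \<beta>)" by (cases z)
  with assms have "xs \<in> Xs" "ys \<in> Xs" "cconj (indic A) (xs, ys, \<beta>) < \<infinity>"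
    unfolding Wdom_def Wset_def by auto
  then have "(xs, ys, max \<beta> 1) \<in> Zset Xs" and "\<forall>u. phiF f g A u z \<le> phiF f g A u (xs, ys, max \<beta> 1)"
    unfolding z Zset_def by (auto intro: phiF_le_phiF_level_max)
  then show ?thesis by blast
qed

lemma Zset_dominated_by_dom_indic:
  assumes "(\<lambda>_. 0) \<in> Xs" and "z \<in> Zset Xs"
  shows "\<exists>z'\<in>Wdom Xs (cconj (indic A)). \<forall>u. phiF f g A u z \<le> phiF f g A u z'"
proof (cases "z \<in> Wdom Xs (cconj (indic A))")
  case False
  have "((\<lambda>_. 0), (\<lambda>_. 0), 1) \<in> Wdom Xs (cconj (indic A))"
    using assms(1) cconj_indic_zero_le[of A] unfolding Wdom_def Wset_def by auto
  moreover have "z \<in> Wset Xs" using assms(2) unfolding Zset_def Wset_def by auto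
  then have "\<forall>u. phiF f g A u z \<le> phiF f g A u ((\<lambda>_. 0), (\<lambda>_. 0), 1)"
    using phiF_eq_minf_outside_dom[OF _ False] by simp
  ultimately show ?thesis by blast
qed blast

lemma vDF_eq_SUP_dom_indic:
  assumes "(\<lambda>_. 0) \<in> Xs"
  shows "vDF Xs f g A = (SUP z\<in>Wdom Xs (cconj (indic A)). INF u\<in>Wdom Xs (cconj g). phiF f g A u z)"
  unfolding vDF_def
  by (rule SUP_eq)
     (meson INF_mono' Zset_dominated_by_dom_indic[OF assms] dom_indic_dominated_by_Zset)+

lemma vDFbar_eq_INF_SUP_dom_indic:
  assumes "(\<lambda>_. 0) \<in> Xs"
  shows "vDFbar Xs f g A = (INF u\<in>Wdom Xs (cconj g). SUP z\<in>Wdom Xs (cconj (indic A)). phiF f g A u z)"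
  unfolding vDFbar_def
  by (rule INF_cong[OF refl], rule SUP_eq)
     (meson Zset_dominated_by_dom_indic[OF assms] dom_indic_dominated_by_Zset)+

lemma Bset_subset_iff:
  assumes "\<And>\<alpha> r. \<alpha> > 0 \<Longrightarrow> (((\<lambda>_. 0), (\<lambda>_. 0), \<alpha>), r) \<in> S \<longleftrightarrow> P (-r)"
    and "\<And>\<alpha> r. \<alpha> > 0 \<Longrightarrow> (((\<lambda>_. 0), (\<lambda>_. 0), \<alpha>), r) \<in> E \<longleftrightarrow> Q (-r)"
  shows "S \<inter> Bset \<subseteq> E \<inter> Bset \<longleftrightarrow> (\<forall>s. P s \<longrightarrow> Q s)"
proof
  assume sub: "S \<inter> Bset \<subseteq> E \<inter> Bset"
  show "\<forall>s. P s \<longrightarrow> Q s"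
  proof (intro allI impI)
    fix s assume "P s"
    then have "(((\<lambda>_. 0), (\<lambda>_. 0), 1), -s) \<in> S \<inter> Bset" using assms(1)[of 1 "-s"] by (simp add: Bset_def)
    with sub show "Q s" using assms(2)[of 1 "-s"] by auto
  qed
qed (use assms in \<open>auto simp: Bset_def\<close>)

lemma mem_Wepi_cconj_fmg_iff:
  assumes "(\<lambda>_. 0) \<in> Xs" and "\<alpha> > 0"
  shows "(((\<lambda>_. 0), (\<lambda>_. 0), \<alpha>), r) \<in> Wepi Xs (cconj (fmg f g A)) \<longleftrightarrow> ereal (-r) \<le> vP f g A"
  using assms cconj_fmg_zero[of \<alpha> f g A] unfolding Wepi_def Wset_def
  by (cases "vP f g A") auto

lemma mem_piece_iff:
  assumes f: "\<forall>x. f x \<noteq> -\<infinity>" and "proper_fun g" and "A \<noteq> {}" and "(\<lambda>_. 0) \<in> Xs"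
    and u: "u \<in> Wdom Xs (cconj g)" and z: "z \<in> Wdom Xs (cconj (indic A))" and "\<alpha> > 0"
  shows "(((\<lambda>_. 0), (\<lambda>_. 0), \<alpha>), r) \<in> piece Xs f g A u z \<longleftrightarrow> ereal (-r) \<le> phiF f g A u z"
proof -
  obtain us vs \<gamma> where uu: "u = (us, vs, \<gamma>)" by (cases u)
  obtain xs ys \<beta> where zz: "z = (xs, ys, \<beta>)" by (cases z)
  have "us \<in> Xs" using u uu by (auto simp: Wdom_def Wset_def)
  obtain G where G: "cconj g u = ereal G"
    using u cconj_gt_minf_of_proper[OF \<open>proper_fun g\<close>, of u] by (cases "cconj g u") (auto simp: Wdom_def)
  obtain D where D: "cconj (indic A) z = ereal D"
    using z cconj_indic_gt_minf[OF \<open>A \<noteq> {}\<close>, of z] by (cases "cconj (indic A) z") (auto simp: Wdom_def)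
  define F where "F = cconj f (\<lambda>x. us x - xs x, \<lambda>x. - ys x, \<beta>)"
  define E where "E = Wepi Xs (cconj (fminc f z))"
  have piece: "piece Xs f g A u z
      = (\<lambda>((a, b, c), r'). ((\<lambda>x. a x - us x, \<lambda>x. b x - 0, c - 0), r' - (G - D))) ` E"
    unfolding piece_def shift_set_def E_def using G D uu by (simp add: sub_lo_def)
  have "(((\<lambda>_. 0), (\<lambda>_. 0), \<alpha>), r) \<in> piece Xs f g A u z \<longleftrightarrow> ((us, \<lambda>_. 0, \<alpha>), r + (G - D)) \<in> E"
  proof
    assume "(((\<lambda>_. 0), (\<lambda>_. 0), \<alpha>), r) \<in> piece Xs f g A u z"
    then obtain a b c r' where "((a, b, c), r') \<in> E"
      and "((\<lambda>x. a x - us x, \<lambda>x. b x - 0, c - 0), r' - (G - D)) = (((\<lambda>_. 0), (\<lambda>_. 0), \<alpha>), r)"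
      unfolding piece by auto
    then have "a = us" "b = (\<lambda>_. 0)" "c = \<alpha>" "r' = r + (G - D)" by (auto simp: fun_eq_iff)
    with \<open>((a, b, c), r') \<in> E\<close> show "((us, \<lambda>_. 0, \<alpha>), r + (G - D)) \<in> E" by simp
  next
    assume "((us, \<lambda>_. 0, \<alpha>), r + (G - D)) \<in> E"
    then show "(((\<lambda>_. 0), (\<lambda>_. 0), \<alpha>), r) \<in> piece Xs f g A u z"
      unfolding piece by (rule image_eqI[rotated]) simp
  qed
  also have "\<dots> \<longleftrightarrow> F \<le> ereal (r + (G - D))"
    unfolding E_def Wepi_def Wset_def F_def zz
    using \<open>us \<in> Xs\<close> \<open>(\<lambda>_. 0) \<in> Xs\<close> cconj_fminc[OF f \<open>\<alpha> > 0\<close>] by simp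
  also have "\<dots> \<longleftrightarrow> ereal (-r) \<le> sub_lo (sub_lo (ereal G) F) (ereal D)"
    by (cases F) (auto simp: sub_lo_def)
  also have "sub_lo (sub_lo (ereal G) F) (ereal D) = phiF f g A u z"
    unfolding phiF_def F_def using G D uu zz by simp
  finally show ?thesis .
qed

lemma mem_Omega_iff:
  assumes "\<forall>x. f x \<noteq> -\<infinity>" and "proper_fun g" and "A \<noteq> {}" and "(\<lambda>_. 0) \<in> Xs" and "\<alpha> > 0"
  shows "(((\<lambda>_. 0), (\<lambda>_. 0), \<alpha>), r) \<in> Omega Xs f g A \<longleftrightarrow>
    (\<exists>z\<in>Wdom Xs (cconj (indic A)). \<forall>u\<in>Wdom Xs (cconj g). ereal (-r) \<le> phiF f g A u z)"
  unfolding Omega_def using mem_piece_iff[OF assms(1-4) _ _ assms(5)] by auto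

lemma mem_Kset_iff:
  assumes "\<forall>x. f x \<noteq> -\<infinity>" and "proper_fun g" and "A \<noteq> {}" and "(\<lambda>_. 0) \<in> Xs" and "\<alpha> > 0"
  shows "(((\<lambda>_. 0), (\<lambda>_. 0), \<alpha>), r) \<in> Kset Xs f g A \<longleftrightarrow>
    (\<forall>u\<in>Wdom Xs (cconj g). \<exists>z\<in>Wdom Xs (cconj (indic A)). ereal (-r) \<le> phiF f g A u z)"
  unfolding Kset_def using mem_piece_iff[OF assms(1-4) _ _ assms(5)] by auto

theorem proposition4p2:
  fixes T :: "'a::real_vector topology"
    and f g :: "'a \<Rightarrow> ereal" and A :: "'a set"
  assumes "lcs_topology T"
    and "\<exists>x::'a. x \<noteq> 0"
    and "proper_fun f" and "convex_fun f"
    and "proper_fun g" and "convex_fun g"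
    and "efdom f \<subseteq> efdom g"
    and "A \<noteq> {}"
  shows "(vP f g A \<ge> vDF (top_dual T) f g A \<longleftrightarrow>
            Omega (top_dual T) f g A \<inter> Bset \<subseteq> Wepi (top_dual T) (cconj (fmg f g A)) \<inter> Bset)
       \<and> (vP f g A \<ge> vDFbar (top_dual T) f g A \<longleftrightarrow>
            Kset (top_dual T) f g A \<inter> Bset \<subseteq> Wepi (top_dual T) (cconj (fmg f g A)) \<inter> Bset)"
proof -
  have f: "\<forall>x. f x \<noteq> -\<infinity>" using \<open>proper_fun f\<close> unfolding proper_fun_def by simp
  note zero = zero_in_top_dual[of T]
  note epi = mem_Wepi_cconj_fmg_iff[OF zero]
  note mem_Omega = mem_Omega_iff[OF f \<open>proper_fun g\<close> \<open>A \<noteq> {}\<close> zero]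
  note mem_Kset = mem_Kset_iff[OF f \<open>proper_fun g\<close> \<open>A \<noteq> {}\<close> zero]
  let ?Dg = "Wdom (top_dual T) (cconj g)" and ?DA = "Wdom (top_dual T) (cconj (indic A))"
  have "Omega (top_dual T) f g A \<inter> Bset \<subseteq> Wepi (top_dual T) (cconj (fmg f g A)) \<inter> Bset
      \<longleftrightarrow> (\<forall>s. (\<exists>z\<in>?DA. \<forall>u\<in>?Dg. ereal s \<le> phiF f g A u z) \<longrightarrow> ereal s \<le> vP f g A)"
    by (rule Bset_subset_iff) (simp_all add: mem_Omega epi)
  moreover have "Kset (top_dual T) f g A \<inter> Bset \<subseteq> Wepi (top_dual T) (cconj (fmg f g A)) \<inter> Bset
      \<longleftrightarrow> (\<forall>s. (\<forall>u\<in>?Dg. \<exists>z\<in>?DA. ereal s \<le> phiF f g A u z) \<longrightarrow> ereal s \<le> vP f g A)"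
    by (rule Bset_subset_iff) (simp_all add: mem_Kset epi)
  ultimately show ?thesis
    by (simp only: vDF_eq_SUP_dom_indic[OF zero] vDFbar_eq_INF_SUP_dom_indic[OF zero]
        SUP_INF_le_iff INF_SUP_le_iff)
qed

end
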